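(* Let $\kappa$ be an infinite cardinal and let $S$ be the lattice of all finite subsets of $\kappa$ (ordered by inclusion). Then $\mathrm{ch}\text{-}\mathrm{Id}(S)$ is a lattice, and if $\kappa=\lambda^{\aleph_0}$ for some cardinal $\lambda$, then there exists a surjective upper semilattice homomorphism from $S$ onto $\mathrm{ch}\text{-}\mathrm{Id}(S)$ (regarded as an upper semilattice under its lattice join).
   Context: For a poset $P$ and $X\subseteq P$, write $P\downarrow X=\{y\in P\mid\exists x\in X,\ y\le x\}$. An ideal of $P$ is a (possibly empty) upward directed downset of $P$. $\mathrm{ch}\text{-}\mathrm{Id}(P)$ denotes the poset, ordered by inclusion, of all ideals of $P$ of the form $P\downarrow C$ with $C\subseteq P$ a chain (possibly empty). *)

theory Defs
  imports "HOL-Library.Equipollence" "HOL-Library.FuncSet"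
begin

definition down :: "'b set \<Rightarrow> ('b \<Rightarrow> 'b \<Rightarrow> bool) \<Rightarrow> 'b set \<Rightarrow> 'b set" where
  "down P le X = {y \<in> P. \<exists>x\<in>X. le y x}"

definition is_downset :: "'b set \<Rightarrow> ('b \<Rightarrow> 'b \<Rightarrow> bool) \<Rightarrow> 'b set \<Rightarrow> bool" where
  "is_downset P le I \<longleftrightarrow> I \<subseteq> P \<and> (\<forall>x\<in>I. \<forall>y\<in>P. le y x \<longrightarrow> y \<in> I)"

definition is_ideal :: "'b set \<Rightarrow> ('b \<Rightarrow> 'b \<Rightarrow> bool) \<Rightarrow> 'b set \<Rightarrow> bool" where
  "is_ideal P le I \<longleftrightarrow> is_downset P le I \<and>
     (\<forall>x\<in>I. \<forall>y\<in>I. \<exists>z\<in>I. le x z \<and> le y z)"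

definition is_chain :: "('b \<Rightarrow> 'b \<Rightarrow> bool) \<Rightarrow> 'b set \<Rightarrow> bool" where
  "is_chain le C \<longleftrightarrow> (\<forall>x\<in>C. \<forall>y\<in>C. le x y \<or> le y x)"

text \<open>ch-Id(P): ideals of P of the form P\<down>C with C a (possibly empty) chain of P.\<close>
definition chId :: "'b set \<Rightarrow> ('b \<Rightarrow> 'b \<Rightarrow> bool) \<Rightarrow> 'b set set" where
  "chId P le = {I. is_ideal P le I \<and> (\<exists>C. C \<subseteq> P \<and> is_chain le C \<and> I = down P le C)}"

definition is_lub :: "('b \<Rightarrow> 'b \<Rightarrow> bool) \<Rightarrow> 'b set \<Rightarrow> 'b set \<Rightarrow> 'b \<Rightarrow> bool" where
  "is_lub le P X z \<longleftrightarrow> z \<in> P \<and> (\<forall>x\<in>X. le x z) \<and> (\<forall>w\<in>P. (\<forall>x\<in>X. le x w) \<longrightarrow> le z w)"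

definition is_glb :: "('b \<Rightarrow> 'b \<Rightarrow> bool) \<Rightarrow> 'b set \<Rightarrow> 'b set \<Rightarrow> 'b \<Rightarrow> bool" where
  "is_glb le P X z \<longleftrightarrow> z \<in> P \<and> (\<forall>x\<in>X. le z x) \<and> (\<forall>w\<in>P. (\<forall>x\<in>X. le w x) \<longrightarrow> le w z)"

definition lattice_on :: "'b set \<Rightarrow> ('b \<Rightarrow> 'b \<Rightarrow> bool) \<Rightarrow> bool" where
  "lattice_on P le \<longleftrightarrow> (\<forall>x\<in>P. \<forall>y\<in>P. (\<exists>z. is_lub le P {x, y} z) \<and> (\<exists>z. is_glb le P {x, y} z))"

end

theory Submission
  imports Defs "HOL-Library.Countable_Set"
begin

text \<open>A chain of finite sets is countable (cardinality is injective on it), so the chain ideals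
  of the lattice of finite subsets of K are exactly the empty ideal and the sets Fpow A of finite
  subsets of countable A \<subseteq> K. Hence ch-Id is, up to an added bottom, the lattice of countable
  subsets of K. If K \<approx> L^\<nat> then K \<approx> K^\<nat>, so there is a map g from K onto the countable subsets
  of K, and a \<mapsto> Fpow (\<Union>(g ` a)) (with {} \<mapsto> {}) is a surjective join homomorphism.\<close>

lemma Union_Fpow [simp]: "\<Union>(Fpow A) = A"
  unfolding Fpow_def by auto

lemma Fpow_subset_Fpow_iff [simp]: "Fpow A \<subseteq> Fpow B \<longleftrightarrow> A \<subseteq> B"
  unfolding Fpow_def by auto

lemma Fpow_Int: "Fpow (A \<inter> B) = Fpow A \<inter> Fpow B"
  unfolding Fpow_def by auto

lemma is_chain_subset_iff: "is_chain (\<subseteq>) C \<longleftrightarrow> subset.chain C C"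
  by (simp add: is_chain_def subset_chain_def)

lemma countable_chain_of_finite_sets:
  assumes "is_chain (\<subseteq>) C" "\<forall>c\<in>C. finite c"
  shows "countable C"
proof -
  have "inj_on card C"
  proof (rule inj_onI)
    fix x y assume "x \<in> C" "y \<in> C" "card x = card y"
    with assms have "x \<subseteq> y \<or> y \<subseteq> x" "finite x" "finite y"
      unfolding is_chain_def by auto
    then show "x = y" using \<open>card x = card y\<close> card_subset_eq by metis
  qed
  then show ?thesis using countable_image_inj_on[of card C] by simp
qed

lemma down_Fpow_chain:
  assumes "is_chain (\<subseteq>) C" "C \<noteq> {}" "C \<subseteq> Fpow K"
  shows "down (Fpow K) (\<subseteq>) C = Fpow (\<Union>C)"
proof
  show "down (Fpow K) (\<subseteq>) C \<subseteq> Fpow (\<Union>C)"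
    by (auto simp: down_def Fpow_def)
  show "Fpow (\<Union>C) \<subseteq> down (Fpow K) (\<subseteq>) C"
  proof
    fix B assume "B \<in> Fpow (\<Union>C)"
    then have "finite B" "B \<subseteq> \<Union>C" by (auto simp: Fpow_def)
    then obtain c where "c \<in> C" "B \<subseteq> c"
      using finite_subset_Union_chain assms(1,2) by (metis is_chain_subset_iff)
    then show "B \<in> down (Fpow K) (\<subseteq>) C"
      using assms(3) \<open>finite B\<close> by (auto simp: down_def Fpow_def)
  qed
qed

lemma countable_Union_chain_of_finite_subsets:
  assumes "countable A"
  obtains C where "is_chain (\<subseteq>) C" "C \<noteq> {}" "C \<subseteq> Fpow A" "\<Union>C = A"
proof
  define e where "e = from_nat_into A"
  define C where "C = range (\<lambda>n. A \<inter> e ` {..<n})"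
  have mono: "A \<inter> e ` {..<m} \<subseteq> A \<inter> e ` {..<n}" if "m \<le> n" for m n
    using that by auto
  show "is_chain (\<subseteq>) C"
    unfolding is_chain_def C_def
  proof (intro ballI)
    fix x y assume "x \<in> range (\<lambda>n. A \<inter> e ` {..<n})" "y \<in> range (\<lambda>n. A \<inter> e ` {..<n})"
    then obtain m n where "x = A \<inter> e ` {..<m}" "y = A \<inter> e ` {..<n}" by blast
    then show "x \<subseteq> y \<or> y \<subseteq> x" using mono nle_le by metis
  qed
  show "C \<noteq> {}" "C \<subseteq> Fpow A"
    by (auto simp: C_def Fpow_def)
  show "\<Union>C = A"
    using subset_range_from_nat_into[OF assms] by (auto simp: C_def e_def)
qed

lemma empty_in_chId: "{} \<in> chId P le"
  unfolding chId_def
  by (auto simp: is_ideal_def is_downset_def is_chain_def down_def intro!: exI[of _ "{}"])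

lemma is_ideal_Fpow: "A \<subseteq> K \<Longrightarrow> is_ideal (Fpow K) (\<subseteq>) (Fpow A)"
  unfolding is_ideal_def is_downset_def
  by (auto simp: Fpow_def intro!: bexI[of _ "_ \<union> _"])

lemma Fpow_in_chId:
  assumes "A \<subseteq> K" "countable A"
  shows "Fpow A \<in> chId (Fpow K) (\<subseteq>)"
proof -
  obtain C where C: "is_chain (\<subseteq>) C" "C \<noteq> {}" "C \<subseteq> Fpow A" "\<Union>C = A"
    using countable_Union_chain_of_finite_subsets[OF assms(2)] .
  have "C \<subseteq> Fpow K" using C(3) Fpow_mono[OF assms(1)] by blast
  then have "Fpow A = down (Fpow K) (\<subseteq>) C" using down_Fpow_chain[of C K] C by simp
  then show ?thesis
    unfolding chId_def using is_ideal_Fpow[OF assms(1)] C(1) \<open>C \<subseteq> Fpow K\<close> by blast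
qed

lemma chId_FpowE:
  assumes "I \<in> chId (Fpow K) (\<subseteq>)" "I \<noteq> {}"
  obtains A where "A \<subseteq> K" "countable A" "I = Fpow A"
proof -
  obtain C where C: "C \<subseteq> Fpow K" "is_chain (\<subseteq>) C" "I = down (Fpow K) (\<subseteq>) C"
    using assms(1) unfolding chId_def by auto
  have "C \<noteq> {}" using C(3) assms(2) by (auto simp: down_def)
  have fin: "\<forall>c\<in>C. finite c" using C(1) by (auto simp: Fpow_def)
  show thesis
  proof
    show "\<Union>C \<subseteq> K" using C(1) by (auto simp: Fpow_def)
    show "countable (\<Union>C)"
      using countable_chain_of_finite_sets[OF C(2) fin] fin countable_UN[of C id]
      by (simp add: countable_finite)
    show "I = Fpow (\<Union>C)" using down_Fpow_chain C \<open>C \<noteq> {}\<close> by simp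
  qed
qed

lemma chId_Fpow_iff:
  "I \<in> chId (Fpow K) (\<subseteq>) \<longleftrightarrow> I = {} \<or> (\<exists>A. A \<subseteq> K \<and> countable A \<and> I = Fpow A)"
  by (metis chId_FpowE empty_in_chId Fpow_in_chId)

lemma chId_Fpow_Union:
  assumes "I \<in> chId (Fpow K) (\<subseteq>)"
  shows "\<Union>I \<subseteq> K" "countable (\<Union>I)" "I \<subseteq> Fpow (\<Union>I)"
  using assms unfolding chId_Fpow_iff by (elim disjE exE conjE; simp)+

lemma is_glb_chId_Fpow:
  assumes "X \<in> chId (Fpow K) (\<subseteq>)" "Y \<in> chId (Fpow K) (\<subseteq>)"
  shows "is_glb (\<subseteq>) (chId (Fpow K) (\<subseteq>)) {X, Y} (X \<inter> Y)"
proof -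
  have "X \<inter> Y \<in> chId (Fpow K) (\<subseteq>)"
  proof (cases "X = {} \<or> Y = {}")
    case True
    then show ?thesis using empty_in_chId by auto
  next
    case False
    then obtain A B where "A \<subseteq> K" "countable A" "X = Fpow A" "B \<subseteq> K" "countable B" "Y = Fpow B"
      using assms chId_FpowE by metis
    then show ?thesis by (simp add: Fpow_Int[symmetric] Fpow_in_chId le_infI1)
  qed
  then show ?thesis unfolding is_glb_def by auto
qed

definition chId_sup :: "'a set set \<Rightarrow> 'a set set \<Rightarrow> 'a set set" where
  "chId_sup X Y = (if X = {} \<and> Y = {} then {} else Fpow (\<Union>X \<union> \<Union>Y))"

lemma is_lub_chId_sup:
  assumes X: "X \<in> chId (Fpow K) (\<subseteq>)" and Y: "Y \<in> chId (Fpow K) (\<subseteq>)"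
  shows "is_lub (\<subseteq>) (chId (Fpow K) (\<subseteq>)) {X, Y} (chId_sup X Y)"
proof (cases "X = {} \<and> Y = {}")
  case True
  then show ?thesis by (simp add: is_lub_def chId_sup_def empty_in_chId)
next
  case False
  have sup: "chId_sup X Y = Fpow (\<Union>X \<union> \<Union>Y)" unfolding chId_sup_def using False by (rule if_not_P)
  have least: "Fpow (\<Union>X \<union> \<Union>Y) \<subseteq> W"
    if W: "W \<in> chId (Fpow K) (\<subseteq>)" "X \<subseteq> W" "Y \<subseteq> W" for W
  proof -
    have "W \<noteq> {}" using False W(2,3) by blast
    then obtain D where "W = Fpow D" using chId_FpowE[OF W(1)] by metis
    then show ?thesis using Union_mono[OF W(2)] Union_mono[OF W(3)] by simp
  qed
  have "X \<subseteq> Fpow (\<Union>X \<union> \<Union>Y)" "Y \<subseteq> Fpow (\<Union>X \<union> \<Union>Y)"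
    using order_trans[OF chId_Fpow_Union(3)[OF X] Fpow_mono[OF Un_upper1]]
      order_trans[OF chId_Fpow_Union(3)[OF Y] Fpow_mono[OF Un_upper2]] .
  moreover have "Fpow (\<Union>X \<union> \<Union>Y) \<in> chId (Fpow K) (\<subseteq>)"
    using chId_Fpow_Union(1,2)[OF X] chId_Fpow_Union(1,2)[OF Y] by (simp add: Fpow_in_chId)
  ultimately show ?thesis
    unfolding is_lub_def sup by (simp add: least)
qed

lemma lattice_on_chId_Fpow: "lattice_on (chId (Fpow K) (\<subseteq>)) (\<subseteq>)"
  unfolding lattice_on_def using is_lub_chId_sup is_glb_chId_Fpow by blast

text \<open>\<phi> k reads h k \<in> L^\<nat> as an \<nat> \<times> \<nat> array via prod_encode and decodes each row back into K:
  K \<approx> L^\<nat> \<approx> L^(\<nat> \<times> \<nat>) \<approx> (L^\<nat>)^\<nat> \<approx> K^\<nat>.\<close>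

lemma eqpoll_PiE_nat_onto_sequences:
  assumes "K \<approx> (UNIV :: nat set) \<rightarrow>\<^sub>E L"
  obtains \<phi> where "\<phi> ` K = {s :: nat \<Rightarrow> 'a. range s \<subseteq> K}"
proof -
  obtain h where h: "bij_betw h K ((UNIV :: nat set) \<rightarrow>\<^sub>E L)"
    using assms unfolding eqpoll_def by blast
  define hi where "hi = inv_into K h"
  have hi: "hi q \<in> K" "h (hi q) = q" if "q \<in> UNIV \<rightarrow>\<^sub>E L" for q
    using that h unfolding hi_def bij_betw_def by (metis inv_into_into, metis f_inv_into_f)
  have hi_h: "hi (h k) = k" if "k \<in> K" for k
    using that h unfolding hi_def bij_betw_def by simp
  have hk: "h k i \<in> L" if "k \<in> K" for k i
    using that h by (auto simp: bij_betw_def PiE_iff)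
  define \<phi> where "\<phi> k n = hi (\<lambda>m. h k (prod_encode (n, m)))" for k n
  have \<phi>K: "\<phi> k n \<in> K" if "k \<in> K" for k n
    unfolding \<phi>_def by (rule hi(1)) (simp add: PiE_iff hk[OF that])
  have "\<phi> ` K = {s. range s \<subseteq> K}"
  proof (intro equalityI subsetI)
    fix s :: "nat \<Rightarrow> 'a" assume "s \<in> \<phi> ` K"
    then show "s \<in> {s. range s \<subseteq> K}" using \<phi>K by auto
  next
    fix s :: "nat \<Rightarrow> 'a" assume "s \<in> {s. range s \<subseteq> K}"
    then have s: "s n \<in> K" for n by auto
    define q where "q i = h (s (fst (prod_decode i))) (snd (prod_decode i))" for i
    have q: "q \<in> UNIV \<rightarrow>\<^sub>E L" by (simp add: PiE_iff q_def hk[OF s])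
    have "(\<lambda>m. h (hi q) (prod_encode (n, m))) = h (s n)" for n
      by (simp add: hi(2)[OF q] q_def)
    then have "\<phi> (hi q) = s"
      by (simp add: \<phi>_def hi_h[OF s] fun_eq_iff)
    then show "s \<in> \<phi> ` K" using hi(1)[OF q] by blast
  qed
  then show thesis by (rule that)
qed

text \<open>A sequence starting with k0 codes the empty set; any other one codes the set of its later
  terms.\<close>

lemma sequences_onto_countable_subsets:
  assumes "k0 \<in> K" "k1 \<in> K" "k0 \<noteq> k1"
  obtains G where "G ` {s :: nat \<Rightarrow> 'a. range s \<subseteq> K} = {A. A \<subseteq> K \<and> countable A}"
proof
  define G where "G s = (if s 0 = k0 then {} else range (s \<circ> Suc))" for s :: "nat \<Rightarrow> 'a"
  show "G ` {s. range s \<subseteq> K} = {A. A \<subseteq> K \<and> countable A}"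
  proof (intro equalityI subsetI)
    fix A assume "A \<in> G ` {s. range s \<subseteq> K}"
    then show "A \<in> {A. A \<subseteq> K \<and> countable A}" by (auto simp: G_def)
  next
    fix A assume A: "A \<in> {A. A \<subseteq> K \<and> countable A}"
    show "A \<in> G ` {s. range s \<subseteq> K}"
    proof (cases "A = {}")
      case True
      then have "G (\<lambda>_. k0) = A" by (simp add: G_def)
      then show ?thesis using assms(1) by blast
    next
      case False
      define t where "t = from_nat_into A"
      have "range t = A" using False A by (simp add: t_def)
      then have "G (case_nat k1 t) = A" "range (case_nat k1 t) \<subseteq> K"
        using A assms by (auto simp: G_def comp_def image_subset_iff split: nat.split)
      then show ?thesis by blast
    qed
  qed
qed

lemma eqpoll_PiE_nat_onto_countable_subsets:
  assumes "infinite K" "K \<approx> (UNIV :: nat set) \<rightarrow>\<^sub>E L"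
  obtains g where "g ` K = {A. A \<subseteq> K \<and> countable A}"
proof -
  obtain \<phi> where \<phi>: "\<phi> ` K = {s :: nat \<Rightarrow> 'a. range s \<subseteq> K}"
    using eqpoll_PiE_nat_onto_sequences[OF assms(2)] by blast
  obtain k0 where k0: "k0 \<in> K" using infinite_imp_nonempty[OF assms(1)] by blast
  obtain k1 where k1: "k1 \<in> K - {k0}"
    using infinite_imp_nonempty[OF infinite_remove[OF assms(1)]] by blast
  obtain G where G: "G ` {s :: nat \<Rightarrow> 'a. range s \<subseteq> K} = {A. A \<subseteq> K \<and> countable A}"
    using sequences_onto_countable_subsets[of k0 K k1] k0 k1 by blast
  have "(G \<circ> \<phi>) ` K = {A. A \<subseteq> K \<and> countable A}"
    by (simp only: image_comp[symmetric] \<phi> G)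
  then show thesis by (rule that)
qed

definition gen_ideal :: "('a \<Rightarrow> 'a set) \<Rightarrow> 'a set \<Rightarrow> 'a set set" where
  "gen_ideal g a = (if a = {} then {} else Fpow (\<Union>(g ` a)))"

lemma gen_ideal_Un: "gen_ideal g (a \<union> b) = chId_sup (gen_ideal g a) (gen_ideal g b)"
  unfolding chId_sup_def gen_ideal_def by (simp add: Fpow_not_empty image_Un)

lemma gen_ideal_image:
  assumes g: "g ` K = {A. A \<subseteq> K \<and> countable A}"
  shows "gen_ideal g ` Fpow K = chId (Fpow K) (\<subseteq>)"
proof (intro equalityI subsetI)
  fix I assume "I \<in> gen_ideal g ` Fpow K"
  then obtain a where a: "a \<subseteq> K" "finite a" "I = gen_ideal g a" by (auto simp: Fpow_def)
  have "g k \<subseteq> K" "countable (g k)" if "k \<in> a" for k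
    using imageI[of k K g] a(1) that unfolding g by auto
  then have "\<Union>(g ` a) \<subseteq> K" "countable (\<Union>(g ` a))"
    using a(2) by (auto intro: countable_finite)
  then show "I \<in> chId (Fpow K) (\<subseteq>)"
    unfolding a(3) gen_ideal_def by (simp add: empty_in_chId Fpow_in_chId)
next
  fix I assume "I \<in> chId (Fpow K) (\<subseteq>)"
  then consider "I = {}" | A where "A \<subseteq> K" "countable A" "I = Fpow A"
    unfolding chId_Fpow_iff by blast
  then show "I \<in> gen_ideal g ` Fpow K"
  proof cases
    case 1
    then have "I = gen_ideal g {}" by (simp add: gen_ideal_def)
    then show ?thesis using empty_in_Fpow by blast
  next
    case 2
    then have "A \<in> g ` K" unfolding g by simp
    then obtain k where "k \<in> K" "g k = A" by blast
    then have "I = gen_ideal g {k}" "{k} \<in> Fpow K"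
      using 2 by (simp_all add: gen_ideal_def Fpow_def)
    then show ?thesis by blast
  qed
qed

theorem lemma3p3:
  fixes K :: "'a set"
  assumes "infinite K"
  defines "S \<equiv> {A. A \<subseteq> K \<and> finite A}"
  shows "lattice_on (chId S (\<subseteq>)) (\<subseteq>) \<and>
    ((\<exists>L :: 'a set. K \<approx> ((UNIV :: nat set) \<rightarrow>\<^sub>E L)) \<longrightarrow>
      (\<exists>f. f \<in> S \<rightarrow> chId S (\<subseteq>) \<and> f ` S = chId S (\<subseteq>) \<and>
         (\<forall>a\<in>S. \<forall>b\<in>S. is_lub (\<subseteq>) (chId S (\<subseteq>)) {f a, f b} (f (a \<union> b)))))"
proof -
  have S: "S = Fpow K" by (simp add: S_def Fpow_def)
  show ?thesis unfolding S
  proof (intro conjI impI lattice_on_chId_Fpow)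
    assume "\<exists>L :: 'a set. K \<approx> (UNIV :: nat set) \<rightarrow>\<^sub>E L"
    then obtain g where "g ` K = {A. A \<subseteq> K \<and> countable A}"
      using eqpoll_PiE_nat_onto_countable_subsets[OF assms(1)] by blast
    define f where "f = gen_ideal g"
    have onto: "f ` Fpow K = chId (Fpow K) (\<subseteq>)"
      unfolding f_def by (rule gen_ideal_image) fact
    then have into: "f \<in> Fpow K \<rightarrow> chId (Fpow K) (\<subseteq>)"
      by (simp add: image_subset_iff_funcset[symmetric])
    have "is_lub (\<subseteq>) (chId (Fpow K) (\<subseteq>)) {f a, f b} (f (a \<union> b))"
      if "a \<in> Fpow K" "b \<in> Fpow K" for a b
      unfolding f_def gen_ideal_Un
      by (rule is_lub_chId_sup; rule funcset_mem[OF into[unfolded f_def]]) (fact that)+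
    with into onto show "\<exists>f. f \<in> Fpow K \<rightarrow> chId (Fpow K) (\<subseteq>) \<and> f ` Fpow K = chId (Fpow K) (\<subseteq>) \<and>
        (\<forall>a\<in>Fpow K. \<forall>b\<in>Fpow K.
           is_lub (\<subseteq>) (chId (Fpow K) (\<subseteq>)) {f a, f b} (f (a \<union> b)))"
      by (intro exI[of _ f] conjI ballI)
  qed
qed

end
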